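(* Let $G$ be a finite group (written additively, not necessarily abelian) with $\#G=q$, let $f:G\to G$ with $v=\#\mathrm{Im}(f)$, and let $k$ be an integer with $1\le k\le q$. If \[ q\sum_{i=0}^{k}(-1)^i\binom{k}{i}\frac{\binom{v}{i}}{\binom{q}{i}}<1,\] then there exists a cover of $G$ associated with $f$ of cardinality $k$.
   Context: $\mathrm{Im}(f)=\{f(x):x\in G\}$. The subtraction table $M_f$ has rows indexed by $G$, columns indexed by $\mathrm{Im}(f)$, and entry $m_{r,c}=r-c$ at position $(r,c)$. A subset $S\subseteq G$ is a cover of $G$ associated with $f$ if every row of $M_f$ contains an entry lying in $S$, i.e. for every $r\in G$ there exists $c\in\mathrm{Im}(f)$ with $r-c\in S$. *)

theory Defs
  imports Complex_Main
begin

text \<open>A finite group G written additively (not necessarily abelian) is modelled as a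
  finite type of class group_add.\<close>

definition subtraction_table_entry :: "'a::group_add \<Rightarrow> 'a \<Rightarrow> 'a" where
  "subtraction_table_entry r c = r - c"

definition is_cover_assoc :: "('a::group_add \<Rightarrow> 'a) \<Rightarrow> 'a set \<Rightarrow> bool" where
  "is_cover_assoc f S \<longleftrightarrow> (\<forall>r. \<exists>c \<in> range f. subtraction_table_entry r c \<in> S)"

end

theory Submission imports Defs begin

text \<open>A \<open>k\<close>-subset of \<open>G\<close> fails to be a cover exactly when it misses some row
  \<open>{r - c | c \<in> Im f}\<close>. Since \<open>c \<mapsto> r - c\<close> is injective, every row has \<open>v\<close> elements and is
  missed by \<open>C(q - v, k)\<close> of the \<open>C(q, k)\<close> \<open>k\<close>-subsets, so a union bound over the \<open>q\<close> rows
  yields a cover as soon as \<open>q C(q - v, k) < C(q, k)\<close>. By inclusion-exclusion the alternating sum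
  in the hypothesis equals \<open>C(q - v, k) / C(q, k)\<close>, so this is exactly the hypothesis.\<close>

lemma alternating_sum_choose_mult_choose:
  assumes "v \<le> q"
  shows "(\<Sum>i=0..k. (-1)^i * int (v choose i) * int ((q - i) choose (k - i))) = int ((q - v) choose k)"
  using assms
proof (induction v arbitrary: q k)
  case 0
  have "(\<Sum>i=0..k. (-1)^i * int (0 choose i) * int ((q - i) choose (k - i)))
      = (\<Sum>i\<in>{0}. (-1)^i * int (0 choose i) * int ((q - i) choose (k - i)))"
    by (rule sum.mono_neutral_right) auto
  then show ?case by simp
next
  case (Suc v)
  then obtain q' where q: "q = Suc q'" and "v \<le> q'"
    by (cases q) auto
  show ?case
  proof (cases k)
    case 0
    then show ?thesis by simp
  next
    case (Suc k')
    let ?F = "\<lambda>w q k. \<Sum>i=0..k. (-1)^i * int (w choose i) * int ((q - i) choose (k - i))"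
    let ?G = "\<lambda>w. \<Sum>i=0..k'. (-1)^Suc i * int (w choose Suc i) * int ((q' - i) choose (k' - i))"
    have shift: "?F w q k = int (q choose k) + ?G w" for w
      unfolding Suc q by (subst sum.atLeast0_atMost_Suc_shift) simp
    have "?G (Suc v) = ?G v - ?F v q' k'"
      unfolding sum_subtractf[symmetric] by (rule sum.cong) (auto simp: algebra_simps)
    then have pascal: "?F (Suc v) q k = ?F v q k - ?F v q' k'"
      using shift by simp
    have "?F v q k = int ((q - v) choose k)" "?F v q' k' = int ((q' - v) choose k')"
      using Suc.IH \<open>v \<le> q'\<close> q by auto
    moreover have "q - v = Suc (q' - v)"
      using q \<open>v \<le> q'\<close> by auto
    ultimately show ?thesis
      using pascal q Suc by simp
  qed
qed

lemma alternating_sum_choose_ratio: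
  assumes "k \<le> q" and "v \<le> q"
  shows "(\<Sum>i=0..k. (-1)^i * real (k choose i) * (real (v choose i) / real (q choose i)))
       = real ((q - v) choose k) / real (q choose k)"
proof -
  have "(\<Sum>i=0..k. (-1)^i * real (k choose i) * (real (v choose i) / real (q choose i)))
      = (\<Sum>i=0..k. (-1)^i * real (v choose i) * real ((q - i) choose (k - i))) / real (q choose k)"
    unfolding sum_divide_distrib
  proof (rule sum.cong)
    fix i assume "i \<in> {0..k}"
    then have "i \<le> k" by simp
    then have "real (q choose k) * real (k choose i) = real (q choose i) * real ((q - i) choose (k - i))"
      using choose_mult[of i k q] \<open>k \<le> q\<close> by (metis of_nat_mult)
    moreover have "q choose i > 0" "q choose k > 0"
      using \<open>i \<le> k\<close> \<open>k \<le> q\<close> by simp_all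
    ultimately show "(-1)^i * real (k choose i) * (real (v choose i) / real (q choose i))
        = (-1)^i * real (v choose i) * real ((q - i) choose (k - i)) / real (q choose k)"
      by (simp add: field_simps)
  qed simp
  also have "(\<Sum>i=0..k. (-1)^i * real (v choose i) * real ((q - i) choose (k - i)))
      = real_of_int (\<Sum>i=0..k. (-1)^i * int (v choose i) * int ((q - i) choose (k - i)))"
    by simp
  finally show ?thesis
    using alternating_sum_choose_mult_choose[OF \<open>v \<le> q\<close>] by simp
qed

lemma exists_subset_card_meeting_all:
  fixes A :: "'i \<Rightarrow> 'a set"
  assumes "finite X" and "finite I"
    and "\<And>i. i \<in> I \<Longrightarrow> A i \<subseteq> X" and "\<And>i. i \<in> I \<Longrightarrow> card (A i) = v"
    and "card I * ((card X - v) choose k) < card X choose k"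
  shows "\<exists>S \<subseteq> X. card S = k \<and> (\<forall>i\<in>I. S \<inter> A i \<noteq> {})"
proof -
  define missing where "missing i = {S. S \<subseteq> X - A i \<and> card S = k}" for i
  have card_missing: "card (missing i) = (card X - v) choose k" if "i \<in> I" for i
  proof -
    have "card (X - A i) = card X - v"
      using card_Diff_subset[of "A i" X] assms(1,3,4) that by (simp add: finite_subset)
    then show ?thesis
      unfolding missing_def using n_subsets[of "X - A i" k] \<open>finite X\<close> by simp
  qed
  have "card (\<Union>i\<in>I. missing i) \<le> (\<Sum>i\<in>I. card (missing i))"
    using \<open>finite I\<close> by (rule card_UN_le)
  also have "\<dots> = card I * ((card X - v) choose k)"
    using card_missing by simp
  also have "\<dots> < card {S. S \<subseteq> X \<and> card S = k}"
    using assms(5) n_subsets[OF \<open>finite X\<close>] by simp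
  finally have "card (\<Union>i\<in>I. missing i) < card {S. S \<subseteq> X \<and> card S = k}" .
  moreover have "finite (\<Union>i\<in>I. missing i)"
    by (rule finite_subset[of _ "Pow X"]) (use \<open>finite X\<close> in \<open>auto simp: missing_def\<close>)
  ultimately have "\<not> {S. S \<subseteq> X \<and> card S = k} \<subseteq> (\<Union>i\<in>I. missing i)"
    using card_mono[of "\<Union>i\<in>I. missing i"] by (meson leD)
  then obtain S where "S \<subseteq> X" "card S = k" and avoids: "\<And>i. i \<in> I \<Longrightarrow> S \<notin> missing i"
    by blast
  moreover have "S \<inter> A i \<noteq> {}" if "i \<in> I" for i
    using \<open>S \<subseteq> X\<close> \<open>card S = k\<close> avoids[OF that] unfolding missing_def by blast
  ultimately show ?thesis
    by blast
qed

theorem theorem6p1: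
  fixes f :: "'a::{group_add, finite} \<Rightarrow> 'a" and k :: nat
  assumes "1 \<le> k" and "k \<le> card (UNIV :: 'a set)"
    and "real (card (UNIV :: 'a set)) *
          (\<Sum>i = 0..k. (-1) ^ i * real (k choose i) *
              (real (card (range f) choose i) / real (card (UNIV :: 'a set) choose i))) < 1"
  shows "\<exists>S :: 'a set. card S = k \<and> is_cover_assoc f S"
proof -
  define q where "q = card (UNIV :: 'a set)"
  define v where "v = card (range f)"
  have "v \<le> q"
    unfolding v_def q_def by (rule card_mono) auto
  then have "real q * (real ((q - v) choose k) / real (q choose k)) < 1"
    using assms(2,3) alternating_sum_choose_ratio[of k q v] unfolding q_def v_def by simp
  moreover have "q choose k > 0"
    using assms(2) q_def by simp
  ultimately have "q * ((q - v) choose k) < q choose k"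
    by (simp add: field_simps) (metis of_nat_less_iff of_nat_mult)
  then obtain S :: "'a set" where "card S = k" and "\<forall>r. S \<inter> (\<lambda>c. r - c) ` range f \<noteq> {}"
    using exists_subset_card_meeting_all[of UNIV UNIV "\<lambda>r. (\<lambda>c. r - c) ` range f" v k]
    by (auto simp: card_image v_def q_def)
  then have "is_cover_assoc f S"
    unfolding is_cover_assoc_def subtraction_table_entry_def by blast
  with \<open>card S = k\<close> show ?thesis by blast
qed

end
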